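(* Let $A=(a_{ij})$ be a real $n\times n$ matrix with nonnegative entries, $\mathbf 1=(1,\ldots,1)^{\mathrm T}$, and $L=\operatorname{diag}(A\mathbf 1)-A$, and assume that $0$ is an eigenvalue of $L$ of algebraic multiplicity at least $2$. Let $S$ be the orthogonal projection of $\mathbb R^n$ onto $\mathcal R(L)\oplus\operatorname{span}(\mathbf 1)$ and, for $\tau>0$, let $\widetilde L(\tau)=\tau^{-1}(I-S)+LS$. Then $\|\widetilde L(\tau)-L\|_E$ decreases as $\tau>0$ increases, and its infimum over $\tau>0$ is $\|LS-L\|_E$. Moreover, over the range $0<\tau\le\bigl(\max_i\sum_{j\neq i}a_{ij}\bigr)^{-1}$, the smallest value of $\|\widetilde L(\tau)-L\|_E$ is attained at $\tau=\bigl(\max_i\sum_{j\neq i}a_{ij}\bigr)^{-1}$.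
   Context: $\|X\|_E$ denotes the Euclidean (Frobenius) norm $\sqrt{\operatorname{trace}(XX^{\mathrm T})}$. $\mathcal R(L)$ is the range of $L$. The condition $0<\tau\le(\max_i\sum_{j\ne i}a_{ij})^{-1}$ is the condition for $I-\tau L$ to be row stochastic. *)

theory Defs
  imports "HOL-Analysis.Analysis" "HOL-Computational_Algebra.Polynomial"
begin

definition frob_norm :: "real^'n^'n \<Rightarrow> real" where
  "frob_norm X = sqrt (trace (X ** transpose X))"

definition laplacian :: "real^'n^'n \<Rightarrow> real^'n^'n" where
  "laplacian A = (\<chi> i j. (if i = j then (A *v vec 1) $ i else 0) - A $ i $ j)"

definition char_poly_mat :: "real^'n^'n \<Rightarrow> real poly" where
  "char_poly_mat M = det (\<chi> i j. (if i = j then [:0, 1:] else 0) - [: M $ i $ j :])"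

definition alg_mult :: "real \<Rightarrow> real^'n^'n \<Rightarrow> nat" where
  "alg_mult c M = order c (char_poly_mat M)"

definition is_orth_proj :: "real^'n^'n \<Rightarrow> (real^'n) set \<Rightarrow> bool" where
  "is_orth_proj S V \<longleftrightarrow> (\<forall>x. S *v x \<in> V \<and> (\<forall>v\<in>V. (x - S *v x) \<bullet> v = 0))"

definition Ltilde :: "real \<Rightarrow> real^'n^'n \<Rightarrow> real^'n^'n \<Rightarrow> real^'n^'n" where
  "Ltilde \<tau> S L = (inverse \<tau>) *\<^sub>R (mat 1 - S) + L ** S"

end

theory Submission imports Defs begin

text \<open>
  Put \<open>P = I - S\<close>. Each column of \<open>P\<close> is orthogonal to the span, which contains the range
  of \<open>L\<close>; hence column \<open>k\<close> of \<open>\<tau>\<^sup>-\<^sup>1 P\<close> is orthogonal to column \<open>k\<close> of \<open>L P\<close>, and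
  \<open>\<parallel>Ltilde \<tau> - L\<parallel>\<^sup>2 = \<tau>\<^sup>-\<^sup>2 \<parallel>I - S\<parallel>\<^sup>2 + \<parallel>L S - L\<parallel>\<^sup>2\<close>. All three claims follow once \<open>S \<noteq> I\<close>,
  i.e. once \<open>range L + span 1\<close> is a proper subspace. Because \<open>L 1 = 0\<close>, the columns of
  \<open>xI - L\<close> sum to \<open>x 1\<close>, so adding them all to one column gives \<open>det (xI - L) = x det N(x)\<close>,
  where \<open>N(x)\<close> has \<open>1\<close> in that column. A double eigenvalue \<open>0\<close> forces \<open>det N(0) = 0\<close>;
  but \<open>N(0)\<close> consists of \<open>1\<close> and all columns of \<open>-L\<close> but one, and the missing column is
  minus the sum of the others, so these vectors span \<open>range L + span 1\<close>.
\<close>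

lemma poly_det: "poly (det (M :: real poly^'n^'n)) x = det (\<chi> i j. poly (M $ i $ j) x)"
  unfolding det_def by (simp add: poly_sum poly_prod)

lemma laplacian_mult_ones: "laplacian A *v vec 1 = (0 :: real^'n)"
  by (simp add: vec_eq_iff laplacian_def matrix_vector_mult_def sum_subtractf)

lemma sum_columns_eq_mult_ones: "(\<Sum>k\<in>UNIV. column k M) = M *v vec 1"
  by (simp add: vec_eq_iff column_def matrix_vector_mult_def)

lemma det_replace_row_by_sum_rows:
  fixes T :: "'a::comm_ring_1^'n^'n"
  shows "det (\<chi> k. if k = i then (\<Sum>j\<in>UNIV. row j T) else row k T) = det T"
proof -
  have "det (\<chi> k. if k = i then (\<Sum>j\<in>UNIV. row j T) else row k T)
      = (\<Sum>j\<in>UNIV. det (\<chi> k. if k = i then row j T else row k T))"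
    by (rule det_linear_row_sum) simp
  also have "\<dots> = det (\<chi> k. if k = i then row i T else row k T)"
  proof (rule sum.mono_neutral_right[where S = "{i}", simplified])
    show "\<forall>j\<in>UNIV - {i}. det (\<chi> k. if k = i then row j T else row k T) = 0"
      by (auto intro: det_identical_rows simp: row_def vec_eq_iff)
  qed simp
  also have "(\<chi> k. if k = i then row i T else row k T) = T"
    by (simp add: row_def vec_eq_iff)
  finally show ?thesis .
qed

definition char_matrix :: "real^'n^'n \<Rightarrow> real poly^'n^'n" where
  "char_matrix M = (\<chi> i j. (if i = j then [:0, 1:] else 0) - [: M $ i $ j :])"

lemma char_poly_mat_eq_det: "char_poly_mat M = det (transpose (char_matrix M))"
  by (simp add: char_poly_mat_def char_matrix_def)

lemma char_poly_mat_factor: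
  fixes M :: "real^'n^'n"
  assumes "M *v vec 1 = 0"
  shows "char_poly_mat M
    = [:0, 1:] * det (\<chi> k. if k = i then vec 1 else column k (char_matrix M))"
proof -
  let ?x = "[:0, 1:] :: real poly" and ?T = "transpose (char_matrix M)"
  have row_sum: "(\<Sum>j\<in>UNIV. row j ?T) = ?x *s vec 1"
  proof -
    have "(\<Sum>j\<in>UNIV. [: M $ i $ j :]) = 0" for i
      using assms by (simp add: sum_to_poly vec_eq_iff matrix_vector_mult_def)
    then show ?thesis
      by (simp add: vec_eq_iff column_def char_matrix_def sum_subtractf)
  qed
  have "det ?T = det (\<chi> k. if k = i then (\<Sum>j\<in>UNIV. row j ?T) else row k ?T)"
    by (rule det_replace_row_by_sum_rows[symmetric])
  also have "\<dots> = det (\<chi> k. if k = i then ?x *s vec 1 else row k ?T)"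
    by (simp only: row_sum)
  also have "\<dots> = ?x * det (\<chi> k. if k = i then vec 1 else row k ?T)"
    by (rule det_row_mul)
  also have "(\<chi> k. if k = i then vec 1 else row k ?T)
      = (\<chi> k. if k = i then vec 1 else column k (char_matrix M))"
    by (simp add: vec_eq_iff row_def column_def transpose_def)
  finally show ?thesis
    by (simp add: char_poly_mat_eq_det)
qed

lemma range_union_ones_subset_span_rows:
  fixes M :: "real^'n^'n"
  assumes "M *v vec 1 = 0"
  shows "range (\<lambda>x. M *v x) \<union> {vec 1}
    \<subseteq> span (rows (\<chi> k. if k = i then vec 1 else - column k M))"
    (is "_ \<subseteq> span (rows ?N)")
proof -
  have row_N: "row k ?N = (if k = i then vec 1 else - column k M)" for k
    by (simp add: row_def vec_eq_iff)
  have row_in: "row k ?N \<in> span (rows ?N)" for k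
    by (rule span_base) (auto simp: rows_def)
  have other_cols: "column k M \<in> span (rows ?N)" if "k \<noteq> i" for k
    using span_neg[OF row_in[of k]] that by (simp add: row_N)
  have "column i M = - (\<Sum>k\<in>UNIV - {i}. column k M)"
    using assms sum_columns_eq_mult_ones[of M] sum.remove[of UNIV i "\<lambda>k. column k M"]
    by (simp add: eq_neg_iff_add_eq_0)
  moreover have "(\<Sum>k\<in>UNIV - {i}. column k M) \<in> span (rows ?N)"
    by (intro span_sum other_cols) auto
  ultimately have "column i M \<in> span (rows ?N)"
    by (simp add: span_neg)
  with other_cols have "column k M \<in> span (rows ?N)" for k
    by (cases "k = i") auto
  then have "M *v x \<in> span (rows ?N)" for x
    unfolding matrix_mult_sum scalar_mult_eq_scaleR by (intro span_sum span_scale)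
  with row_in[of i] show ?thesis by (auto simp: row_N)
qed

lemma alg_mult_zero_ge_2_imp_span_ne_UNIV:
  fixes M :: "real^'n^'n"
  assumes ones: "M *v vec 1 = 0" and mult: "alg_mult 0 M \<ge> 2"
  shows "span (range (\<lambda>x. M *v x) \<union> {vec 1}) \<noteq> UNIV"
proof
  assume full: "span (range (\<lambda>x. M *v x) \<union> {vec 1}) = UNIV"
  define i :: 'n where "i = undefined"
  let ?x = "[:0, 1:] :: real poly"
  let ?N = "\<chi> k. if k = i then vec 1 else column k (char_matrix M)"
  let ?N' = "\<chi> k. if k = i then vec 1 else - column k M"
  have "?x ^ 2 dvd char_poly_mat M"
    using mult order_1[of 0 "char_poly_mat M"] le_imp_power_dvd
    by (metis alg_mult_def dvd_trans minus_zero)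
  then have "?x * ?x dvd ?x * det ?N"
    by (simp only: char_poly_mat_factor[OF ones, of i] power2_eq_square)
  then have "?x dvd det ?N"
    by (subst (asm) dvd_mult_cancel_left) simp
  then have "poly (det ?N) 0 = 0"
    by (simp add: dvd_iff_poly_eq_0)
  then have "det (\<chi> k l. poly (?N $ k $ l) 0) = 0"
    by (simp only: poly_det)
  moreover have "(\<chi> k l. poly (?N $ k $ l) 0) = ?N'"
    by (simp add: vec_eq_iff column_def char_matrix_def)
  moreover have "span (rows ?N') = UNIV"
    using span_minimal[OF range_union_ones_subset_span_rows[OF ones, of i] subspace_span] full
    by blast
  then have "det ?N' \<noteq> 0"
    by (simp add: invertible_det_nz[symmetric] invertible_left_inverse
        matrix_left_invertible_span_rows)
  ultimately show False
    by simp
qed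

lemma frob_norm_sum_columns: "frob_norm X = sqrt (\<Sum>k\<in>UNIV. (norm (column k X))\<^sup>2)"
proof -
  have "trace (X ** transpose X) = (\<Sum>i\<in>UNIV. \<Sum>k\<in>UNIV. X $ i $ k * X $ i $ k)"
    by (simp add: trace_def matrix_matrix_mult_def transpose_def)
  also have "\<dots> = (\<Sum>k\<in>UNIV. (norm (column k X))\<^sup>2)"
    by (subst sum.swap) (simp add: power2_norm_eq_inner inner_vec_def column_def)
  finally show ?thesis by (simp add: frob_norm_def)
qed

lemma frob_norm_nonneg: "frob_norm X \<ge> 0"
  by (simp add: frob_norm_sum_columns sum_nonneg)

lemma frob_norm_pos:
  assumes "X \<noteq> 0"
  shows "frob_norm X > 0"
proof -
  obtain k where "column k X \<noteq> 0"
    using assms by (auto simp: column_def vec_eq_iff)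
  then have "(\<Sum>k\<in>UNIV. (norm (column k X))\<^sup>2) > 0"
    by (intro sum_pos2[of UNIV k]) auto
  then show ?thesis
    by (simp add: frob_norm_sum_columns)
qed

lemma frob_norm_Ltilde_minus:
  fixes L S :: "real^'n^'n"
  assumes "is_orth_proj S V" and "range (\<lambda>x. L *v x) \<subseteq> V"
  shows "frob_norm (Ltilde \<tau> S L - L)
    = sqrt ((inverse \<tau>)\<^sup>2 * (frob_norm (mat 1 - S))\<^sup>2 + (frob_norm (L ** S - L))\<^sup>2)"
proof -
  define P where "P = mat 1 - S"
  have orth: "inner (column k P) (L *v column k P) = 0" for k
  proof -
    have "column k P = axis k 1 - S *v axis k 1"
      by (simp add: P_def matrix_vector_mult_basis[symmetric] matrix_vector_mult_diff_rdistrib)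
    then show ?thesis
      using assms unfolding is_orth_proj_def by (metis rangeI subsetD)
  qed
  have "column k (Ltilde \<tau> S L - L) = inverse \<tau> *\<^sub>R column k P - L *v column k P"
    and "column k (L ** S - L) = - (L *v column k P)" for k
    by (simp_all add: matrix_vector_mult_basis[symmetric] Ltilde_def P_def
        matrix_vector_mult_add_rdistrib matrix_vector_mult_diff_rdistrib
        scaleR_matrix_vector_assoc[symmetric] matrix_vector_mul_assoc
        matrix_vector_mult_diff_distrib)
  moreover have "(norm (c *\<^sub>R p - q))\<^sup>2 = c\<^sup>2 * (norm p)\<^sup>2 + (norm q)\<^sup>2"
    if "inner p q = 0" for c :: real and p q :: "real^'n"
    using norm_add_Pythagorean[of "c *\<^sub>R p" "- q"] that
    by (simp add: orthogonal_def power_mult_distrib)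
  ultimately show ?thesis
    by (simp add: frob_norm_sum_columns orth P_def[symmetric] sum.distrib sum_distrib_left
        sum_nonneg)
qed

lemma sqrt_inverse_sq_strict_antimono:
  fixes a b :: real
  assumes "a > 0" "0 < s" "s < t"
  shows "sqrt ((inverse t)\<^sup>2 * a + b) < sqrt ((inverse s)\<^sup>2 * a + b)"
  using assms by (simp add: power_strict_mono less_imp_inverse_less)

lemma INF_sqrt_inverse_sq:
  fixes a b :: real
  assumes "a \<ge> 0" "b \<ge> 0"
  shows "(INF t\<in>{0<..}. sqrt ((inverse t)\<^sup>2 * a + b)) = sqrt b"
proof (rule antisym)
  have lower: "sqrt b \<le> sqrt ((inverse t)\<^sup>2 * a + b)" for t
    using assms by simp
  then show "sqrt b \<le> (INF t\<in>{0<..}. sqrt ((inverse t)\<^sup>2 * a + b))"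
    by (intro cINF_greatest) auto
  have bdd: "bdd_below ((\<lambda>t. sqrt ((inverse t)\<^sup>2 * a + b)) ` {0<..})"
    by (rule bdd_belowI2) (rule lower)
  have "\<forall>\<^sub>F t in at_top. (INF t\<in>{0<..}. sqrt ((inverse t)\<^sup>2 * a + b))
      \<le> sqrt ((inverse t)\<^sup>2 * a + b)"
    using eventually_gt_at_top[of 0] by eventually_elim (rule cINF_lower[OF bdd], simp)
  moreover have "((\<lambda>t. inverse t :: real) \<longlongrightarrow> 0) at_top"
    by (rule tendsto_inverse_0_at_top[OF filterlim_ident])
  then have "((\<lambda>t. sqrt ((inverse t)\<^sup>2 * a + b)) \<longlongrightarrow> sqrt (0\<^sup>2 * a + b)) at_top"
    by (intro tendsto_real_sqrt tendsto_add tendsto_mult tendsto_power tendsto_const)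
  ultimately show "(INF t\<in>{0<..}. sqrt ((inverse t)\<^sup>2 * a + b)) \<le> sqrt b"
    by (simp add: tendsto_lowerbound)
qed

theorem proposition2:
  fixes A S :: "real^'n^'n"
  assumes nonneg: "\<forall>i j. A $ i $ j \<ge> 0"
    and mult: "alg_mult 0 (laplacian A) \<ge> 2"
    and proj: "is_orth_proj S (span (range (\<lambda>x. laplacian A *v x) \<union> {vec 1}))"
  shows "(\<forall>\<tau>1 \<tau>2. 0 < \<tau>1 \<longrightarrow> \<tau>1 < \<tau>2 \<longrightarrow>
            frob_norm (Ltilde \<tau>2 S (laplacian A) - laplacian A)
              < frob_norm (Ltilde \<tau>1 S (laplacian A) - laplacian A))
       \<and> (INF \<tau>\<in>{0<..}. frob_norm (Ltilde \<tau> S (laplacian A) - laplacian A))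
            = frob_norm (laplacian A ** S - laplacian A)
       \<and> (let m = Max (range (\<lambda>i. \<Sum>j\<in>UNIV - {i}. A $ i $ j)) in
            m > 0 \<longrightarrow>
            (\<forall>\<tau>. 0 < \<tau> \<and> \<tau> \<le> inverse m \<longrightarrow>
               frob_norm (Ltilde (inverse m) S (laplacian A) - laplacian A)
                 \<le> frob_norm (Ltilde \<tau> S (laplacian A) - laplacian A)))"
proof -
  define L where "L = laplacian A"
  define a where "a = (frob_norm (mat 1 - S))\<^sup>2"
  define b where "b = (frob_norm (L ** S - L))\<^sup>2"
  have norm_eq: "frob_norm (Ltilde \<tau> S L - L) = sqrt ((inverse \<tau>)\<^sup>2 * a + b)" for \<tau>
    using frob_norm_Ltilde_minus[OF proj, of L] by (auto simp: a_def b_def L_def intro: span_base)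
  have "S \<noteq> mat 1"
    using proj alg_mult_zero_ge_2_imp_span_ne_UNIV[OF laplacian_mult_ones mult]
    by (auto simp: is_orth_proj_def)
  then have "a > 0"
    using frob_norm_pos[of "mat 1 - S"] by (simp add: a_def)
  then have decreasing: "\<forall>\<tau>1 \<tau>2. 0 < \<tau>1 \<longrightarrow> \<tau>1 < \<tau>2 \<longrightarrow>
      frob_norm (Ltilde \<tau>2 S L - L) < frob_norm (Ltilde \<tau>1 S L - L)"
    unfolding norm_eq using sqrt_inverse_sq_strict_antimono by blast
  moreover have "(INF \<tau>\<in>{0<..}. frob_norm (Ltilde \<tau> S L - L)) = frob_norm (L ** S - L)"
    using \<open>a > 0\<close> by (simp add: norm_eq INF_sqrt_inverse_sq b_def frob_norm_nonneg)
  moreover have "frob_norm (Ltilde t S L - L) \<le> frob_norm (Ltilde \<tau> S L - L)"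
    if "0 < \<tau>" "\<tau> \<le> t" for \<tau> t
    using decreasing[rule_format, of \<tau> t] that by (cases "\<tau> = t") auto
  ultimately show ?thesis
    unfolding L_def Let_def by blast
qed

end
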